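(* Let $k\ge 4$ be an integer and let $t$ be a positive integer divisible by $\operatorname{lcm}(2,3,\ldots,2k-1)$. If $S$ is a $k$-bounded zero-sum sequence of length $t+k^2-k-1$ that is $t$-avoiding, then either all terms of $S$ lie in $\{-1,k-1,k\}$ or all terms of $S$ lie in $\{1,-(k-1),-k\}$.
   Context: A sequence is a finite multiset of integers; its length is counted with multiplicity and a subsequence is a sub-multiset. $S$ is zero-sum if the sum of its terms is $0$, and $k$-bounded if all terms lie in $[-k,k]$. A zero-sum sequence is $t$-avoiding if it has no zero-sum subsequence of length exactly $t$. *)

theory Defs
  imports Main "HOL-Library.Multiset"
begin

text \<open>Sequences are finite multisets of integers.\<close>

definition zero_sum :: "int multiset \<Rightarrow> bool" where
  "zero_sum S \<longleftrightarrow> sum_mset S = 0"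

definition k_bounded :: "int \<Rightarrow> int multiset \<Rightarrow> bool" where
  "k_bounded k S \<longleftrightarrow> (\<forall>x \<in># S. -k \<le> x \<and> x \<le> k)"

definition t_avoiding :: "nat \<Rightarrow> int multiset \<Rightarrow> bool" where
  "t_avoiding t S \<longleftrightarrow> zero_sum S \<and>
     \<not> (\<exists>T. T \<subseteq># S \<and> size T = t \<and> zero_sum T)"

end

theory Submission
  imports Defs
begin

text \<open>Let \<open>m = k\<^sup>2 - k - 1\<close>. Since \<open>S\<close> is zero-sum of length \<open>t + m\<close>, avoiding zero-sum
  subsequences of length \<open>t\<close> is the same as avoiding them of length \<open>m\<close>. As \<open>t \<ge> k\<^sup>4\<close>, some
  \<open>a \<in> [1, k]\<close> and some \<open>-b \<in> [-k, -1]\<close> occur at least \<open>m\<close> times each. A sub-multiset \<open>T\<close>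
  of the remaining terms extends by copies of \<open>a\<close> and \<open>-b\<close> to a zero-sum subsequence of
  length \<open>m\<close> as soon as \<open>a + b\<close> divides \<open>b m - \<Sum>(x + b)\<close> and two size inequalities hold.
  Divisibility holds for all remaining terms together because \<open>(a + b) | b t\<close>, and a minimal
  such \<open>T\<close> is zero-sum free modulo \<open>a + b\<close>, hence has fewer than \<open>a + b\<close> terms (Davenport).
  The inequalities then rule out \<open>a, b \<ge> 2\<close>; for \<open>b = 1\<close> they force \<open>a \<in> {k - 1, k}\<close>
  and all remaining terms into \<open>{k - 1, k}\<close>; the case \<open>a = 1\<close> is the mirror image.\<close>


lemma sum_mset_le_size_mult:
  fixes f :: "'a \<Rightarrow> 'b::{ordered_comm_monoid_add, semiring_1}"
  assumes "\<And>x. x \<in># T \<Longrightarrow> f x \<le> c"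
  shows "(\<Sum>x\<in>#T. f x) \<le> of_nat (size T) * c"
proof -
  have "(\<Sum>x\<in>#T. f x) \<le> (\<Sum>x\<in>#T. c)" using assms by (rule sum_mset_mono)
  thus ?thesis by simp
qed

lemma sum_mset_le_size_mult_remove:
  fixes f :: "'a \<Rightarrow> 'b::{ordered_comm_monoid_add, semiring_1}"
  assumes "x \<in># T" "f x \<le> c" "\<And>y. y \<in># T \<Longrightarrow> f y \<le> d"
  shows "(\<Sum>y\<in>#T. f y) \<le> c + of_nat (size T - 1) * d"
proof -
  have "(\<Sum>y\<in>#T. f y) = f x + (\<Sum>y\<in>#T - {#x#}. f y)"
    using \<open>x \<in># T\<close> by (metis image_mset_add_mset insert_DiffM sum_mset.insert)
  moreover have "(\<Sum>y\<in>#T - {#x#}. f y) \<le> of_nat (size (T - {#x#})) * d"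
    using assms(3) by (intro sum_mset_le_size_mult) (meson in_diffD)
  moreover have "size (T - {#x#}) = size T - 1" using \<open>x \<in># T\<close> by (rule size_Diff_singleton)
  ultimately show ?thesis using \<open>f x \<le> c\<close> by (simp add: add_mono)
qed

lemma sum_mset_le_if_size_mult_le:
  fixes f :: "'a \<Rightarrow> 'b::linordered_idom"
  assumes "\<And>x. x \<in># T \<Longrightarrow> of_nat (size T) * f x \<le> c" and "0 \<le> c"
  shows "(\<Sum>x\<in>#T. f x) \<le> c"
proof (cases "T = {#}")
  case False
  hence "0 < (of_nat (size T) :: 'b)" by (simp add: nonempty_has_size)
  have "of_nat (size T) * (\<Sum>x\<in>#T. f x) = (\<Sum>x\<in>#T. of_nat (size T) * f x)"
    by (rule sum_mset_distrib_left)
  also have "\<dots> \<le> of_nat (size T) * c" using assms(1) by (rule sum_mset_le_size_mult)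
  finally show ?thesis using \<open>0 < of_nat (size T)\<close> by simp
qed (use assms in simp)

lemma sum_mset_shift:
  fixes T :: "'a::comm_semiring_1 multiset"
  shows "(\<Sum>x\<in>#T. x + c) = sum_mset T + of_nat (size T) * c"
  by (induction T) (simp_all add: algebra_simps)

lemma dvd_sum_mset_minus_size_mult:
  fixes f :: "'a \<Rightarrow> 'b::comm_ring_1"
  assumes "\<And>x. x \<in># T \<Longrightarrow> N dvd f x - c"
  shows "N dvd (\<Sum>x\<in>#T. f x) - of_nat (size T) * c"
  using assms
proof (induction T)
  case (add x T)
  hence "N dvd (f x - c) + ((\<Sum>x\<in>#T. f x) - of_nat (size T) * c)" by simp
  thus ?case by (simp add: algebra_simps)
qed simp

lemma size_le_count_if_constant:
  assumes "T \<subseteq># U" and "\<And>x. x \<in># T \<Longrightarrow> x = c"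
  shows "size T \<le> count U c"
proof -
  have "T = replicate_mset (size T) c" using assms(2) by (induction T) auto
  thus ?thesis using assms(1) by (metis count_le_replicate_mset_subset_eq)
qed

lemma sum_mset_image_uminus:
  fixes R :: "'a::ab_group_add multiset"
  shows "sum_mset (image_mset uminus R) = - sum_mset R"
  by (induction R) simp_all

lemma count_image_mset_uminus:
  fixes S :: "'a::group_add multiset"
  shows "count (image_mset uminus S) x = count S (- x)"
proof -
  have "uminus -` {x} = {- x}" by (auto simp: minus_equation_iff)
  thus ?thesis by (cases "- x \<in># S") (auto simp: count_image_mset not_in_iff)
qed

lemma k_bounded_image_uminus: "k_bounded k (image_mset uminus S) \<longleftrightarrow> k_bounded k S"
  by (auto simp: k_bounded_def)

lemma t_avoiding_image_uminusI:
  assumes "t_avoiding t S"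
  shows "t_avoiding t (image_mset uminus S)"
  unfolding t_avoiding_def zero_sum_def
proof safe
  show "sum_mset (image_mset uminus S) = 0"
    using assms by (simp add: t_avoiding_def zero_sum_def sum_mset_image_uminus)
next
  fix R assume R: "R \<subseteq># image_mset uminus S" "t = size R" "sum_mset R = 0"
  have "image_mset uminus R \<subseteq># S"
    using image_mset_subseteq_mono[OF R(1), of uminus] by (simp add: multiset.map_comp comp_def)
  moreover have "size (image_mset uminus R) = t" "sum_mset (image_mset uminus R) = 0"
    using R by (simp_all add: sum_mset_image_uminus)
  ultimately show False
    using assms unfolding t_avoiding_def zero_sum_def by blast
qed

lemma t_avoiding_image_uminus: "t_avoiding t (image_mset uminus S) \<longleftrightarrow> t_avoiding t S"
  using t_avoiding_image_uminusI[of t S] t_avoiding_image_uminusI[of t "image_mset uminus S"]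
  by (auto simp: multiset.map_comp comp_def)

lemma t_avoiding_complement:
  assumes "size S = t + m" and "t_avoiding t S"
  shows "t_avoiding m S"
  unfolding t_avoiding_def
proof (intro conjI notI)
  show "zero_sum S" using assms(2) by (simp add: t_avoiding_def)
next
  assume "\<exists>R. R \<subseteq># S \<and> size R = m \<and> zero_sum R"
  then obtain R where R: "R \<subseteq># S" "size R = m" "zero_sum R" by blast
  have "S - R \<subseteq># S" "size (S - R) = t" "zero_sum (S - R)"
    using R assms by (auto simp: size_Diff_submset t_avoiding_def zero_sum_def sum_mset_diff)
  thus False using assms(2) unfolding t_avoiding_def by blast
qed

section \<open>Zero-sum free sequences modulo N\<close>

definition zero_sum_free_mod :: "int \<Rightarrow> int multiset \<Rightarrow> bool" where
  "zero_sum_free_mod N U \<longleftrightarrow> (\<forall>Z. Z \<subseteq># U \<longrightarrow> Z \<noteq> {#} \<longrightarrow> \<not> N dvd sum_mset Z)"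

lemma prefix_sums_mod_inj_on:
  assumes "zero_sum_free_mod N (mset xs)"
  shows "inj_on (\<lambda>i. sum_list (take i xs) mod N) {0..length xs}"
proof (rule linorder_inj_onI')
  fix i j assume "i \<in> {0..length xs}" "j \<in> {0..length xs}" "i < j"
  define Z where "Z = take (j - i) (drop i xs)"
  have "take j xs = take i xs @ Z"
    using take_add[of i "j - i" xs] \<open>i < j\<close> by (simp add: Z_def)
  hence "mset Z \<subseteq># mset (take j xs)" and sum_Z: "sum_list (take j xs) = sum_list (take i xs) + sum_list Z"
    by simp_all
  moreover have "mset (take j xs) \<subseteq># mset xs"
    by (metis append_take_drop_id mset_append mset_subset_eq_add_left)
  moreover have "mset Z \<noteq> {#}" using \<open>i < j\<close> \<open>j \<in> {0..length xs}\<close> by (auto simp: Z_def)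
  ultimately have "\<not> N dvd sum_list Z"
    using assms unfolding zero_sum_free_mod_def by (metis sum_mset_sum_list subset_mset.order_trans)
  thus "sum_list (take i xs) mod N \<noteq> sum_list (take j xs) mod N"
    by (simp add: sum_Z mod_eq_dvd_iff)
qed

text \<open>The Davenport constant of \<open>\<int>/N\<close> is \<open>N\<close>: the \<open>size U + 1\<close> prefix sums are distinct modulo \<open>N\<close>.\<close>

lemma size_less_if_zero_sum_free_mod:
  assumes "N > 0" and "zero_sum_free_mod N U"
  shows "int (size U) < N"
proof -
  obtain xs where xs: "mset xs = U" using ex_mset by blast
  have "(\<lambda>i. sum_list (take i xs) mod N) ` {0..length xs} \<subseteq> {0..<N}"
    using \<open>N > 0\<close> by auto
  hence "card {0..length xs} \<le> card {0..<N}"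
    using prefix_sums_mod_inj_on assms(2) xs by (metis card_inj_on_le finite_atLeastLessThan_int)
  thus ?thesis using xs by auto
qed

lemma prefix_sums_mod_surj:
  assumes "N > 0" and "zero_sum_free_mod N (mset xs)" and "int (length xs) = N - 1"
  shows "(\<lambda>i. sum_list (take i xs) mod N) ` {0..length xs} = {0..<N}"
proof (rule card_subset_eq)
  show "(\<lambda>i. sum_list (take i xs) mod N) ` {0..length xs} \<subseteq> {0..<N}" using \<open>N > 0\<close> by auto
  show "card ((\<lambda>i. sum_list (take i xs) mod N) ` {0..length xs}) = card {0..<N}"
    using card_image[OF prefix_sums_mod_inj_on[OF assms(2)]] assms(3) by simp
qed simp

text \<open>In a zero-sum-free sequence of maximal length \<open>N - 1\<close> all terms are congruent: with \<open>v\<close>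
  placed first and \<open>u\<close> second, the residue of \<open>u\<close> must be one of the prefix sums, and only the
  prefix sum \<open>v\<close> avoids producing a zero-sum subsequence.\<close>

lemma congruent_if_zero_sum_free_mod_maximal:
  assumes "N > 0" and zsf: "zero_sum_free_mod N U" and size_U: "int (size U) = N - 1"
    and "u \<in># U" "v \<in># U"
  shows "N dvd (u - v)"
proof (cases "u = v")
  case False
  then obtain R where U: "U = add_mset v (add_mset u R)"
    using \<open>u \<in># U\<close> \<open>v \<in># U\<close> by (metis insert_DiffM insert_noteq_member)
  obtain rs where rs: "mset rs = R" using ex_mset by blast
  define xs where "xs = v # u # rs"
  have mset_xs: "mset xs = U" by (simp add: xs_def U rs)
  have "zero_sum_free_mod N (mset xs)" "int (length xs) = N - 1"
    using zsf size_U mset_xs by auto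
  hence "(\<lambda>i. sum_list (take i xs) mod N) ` {0..length xs} = {0..<N}"
    using prefix_sums_mod_surj \<open>N > 0\<close> by blast
  hence "u mod N \<in> (\<lambda>i. sum_list (take i xs) mod N) ` {0..length xs}"
    using \<open>N > 0\<close> by simp
  then obtain i where "sum_list (take i xs) mod N = u mod N" by auto
  hence dvd_i: "N dvd (sum_list (take i xs) - u)" by (simp add: mod_eq_dvd_iff)
  have not_dvd: "\<not> N dvd sum_mset Z" if "Z \<subseteq># U" "Z \<noteq> {#}" for Z
    using zsf that unfolding zero_sum_free_mod_def by blast
  consider "i = 0" | "i = 1" | j where "i = Suc (Suc j)" by (cases i; cases "i - 1") auto
  thus ?thesis
  proof cases
    case 1
    thus ?thesis using dvd_i not_dvd[of "{#u#}"] \<open>u \<in># U\<close> by simp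
  next
    case 2
    thus ?thesis using dvd_i by (simp add: xs_def dvd_diff_commute)
  next
    case (3 j)
    have "mset (take j rs) \<subseteq># R"
      using rs by (metis append_take_drop_id mset_append mset_subset_eq_add_left)
    hence "add_mset v (mset (take j rs)) \<subseteq># U"
      unfolding U
      by (metis add_mset_add_single mset_subset_eq_add_left subset_mset.order_trans
          mset_subset_eq_add_mset_cancel)
    moreover have "sum_list (take i xs) - u = sum_mset (add_mset v (mset (take j rs)))"
      by (simp add: 3 xs_def sum_mset_sum_list)
    ultimately show ?thesis using not_dvd[of "add_mset v (mset (take j rs))"] dvd_i by simp
  qed
qed simp

lemma obtain_zero_sum_free_mod_subset:
  assumes "N dvd (c - sum_mset U)"
  obtains V where "V \<subseteq># U" "N dvd (c - sum_mset V)" "zero_sum_free_mod N V"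
proof -
  define P where "P V \<longleftrightarrow> V \<subseteq># U \<and> N dvd (c - sum_mset V)" for V
  obtain V where "P V" and least: "\<And>W. P W \<Longrightarrow> size V \<le> size W"
    using ex_has_least_nat[of P U size] assms by (auto simp: P_def)
  have "\<not> N dvd sum_mset Z" if "Z \<subseteq># V" "Z \<noteq> {#}" for Z
  proof
    assume "N dvd sum_mset Z"
    moreover have "c - sum_mset (V - Z) = (c - sum_mset V) + sum_mset Z"
      using \<open>Z \<subseteq># V\<close> by (simp add: sum_mset_diff)
    moreover have "V - Z \<subseteq># U"
      using \<open>P V\<close> unfolding P_def by (meson diff_subset_eq_self subset_mset.order_trans)
    ultimately have "P (V - Z)"
      using \<open>P V\<close> unfolding P_def by (metis dvd_add)
    hence "size V \<le> size (V - Z)" by (rule least)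
    moreover have "size (V - Z) < size V"
      using that size_mset_mono[OF that(1)] by (simp add: size_Diff_submset nonempty_has_size)
    ultimately show False by simp
  qed
  thus ?thesis using that \<open>P V\<close> unfolding P_def zero_sum_free_mod_def by blast
qed

lemma dvd_cases_if_abs_le:
  fixes n x :: int
  assumes "0 < n" "n dvd x" "-n \<le> x" "x \<le> n"
  shows "x = -n \<or> x = 0 \<or> x = n"
proof -
  obtain q where x: "x = n * q" using assms(2) by (auto elim: dvdE)
  have "n * (-1) \<le> n * q" "n * q \<le> n * 1" using assms(3,4) x by simp_all
  hence "-1 \<le> q" "q \<le> 1" using \<open>0 < n\<close> by (simp_all only: mult_le_cancel_left_pos)
  hence "q = -1 \<or> q = 0 \<or> q = 1" by linarith
  thus ?thesis using x by auto
qed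

lemma add_dvd_mult_if_interval_dvd:
  fixes a b k t :: int
  assumes dvd: "\<And>n. 2 \<le> n \<Longrightarrow> n \<le> 2 * k - 1 \<Longrightarrow> n dvd t"
    and "2 \<le> k" "1 \<le> a" "a \<le> k" "1 \<le> b" "b \<le> k"
  shows "(a + b) dvd b * t"
proof (cases "a + b \<le> 2 * k - 1")
  case True
  thus ?thesis using assms by auto
next
  case False
  hence "a = k" "b = k" using assms by auto
  moreover obtain r where "t = 2 * r" using dvd[of 2] \<open>2 \<le> k\<close> by (auto elim: dvdE)
  ultimately have "b * t = (a + b) * r" by simp
  thus ?thesis by simp
qed

text \<open>With \<open>k \<le> 2^j < 2k\<close>, the pairwise coprime divisors \<open>2^j\<close>, \<open>2k - 5\<close>, \<open>2k - 3\<close>, \<open>2k - 1\<close> of \<open>t\<close>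
  have product at least \<open>k^4\<close>.\<close>

lemma pow4_le_if_Lcm_dvd:
  fixes k t :: nat
  assumes "4 \<le> k" and "0 < t" and "Lcm {2..2*k-1} dvd t"
  shows "k^4 \<le> t"
proof -
  have dvd: "n dvd t" if "2 \<le> n" "n \<le> 2*k-1" for n
    using assms(3) dvd_Lcm[of n "{2..2*k-1}"] that by (meson atLeastAtMost_iff dvd_trans)
  obtain j where j: "k \<le> 2^j" "2^j < 2*k"
  proof -
    obtain n where "2^n < k" "k \<le> 2^(n+1)" using ex_power_ivl2[of 2 k] \<open>4 \<le> k\<close> by auto
    thus ?thesis using that[of "n + 1"] by simp
  qed
  obtain v where k: "k = v + 4" using \<open>4 \<le> k\<close> by (metis add.commute le_Suc_ex)
  define u where "u = 2*v + 3"
  have coprime_shift: "coprime w (w + 2^e)" if "odd w" for w e :: nat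
    using that by (metis coprime_iff_gcd_eq_1 coprime_power_right_iff coprime_right_2_iff_odd gcd_add2)
  have "odd u" by (simp add: u_def)
  have dvd_t: "u dvd t" "u + 2 dvd t" "u + 4 dvd t" "2^j dvd t"
    using dvd j by (simp_all add: u_def k)
  have "coprime u (u + 2)" using coprime_shift[of u 1] \<open>odd u\<close> by simp
  moreover have "coprime (u * (u + 2)) (u + 4)"
  proof -
    have "coprime u (u + 2^2)" by (rule coprime_shift) fact
    moreover have "coprime (u + 2) (u + 2 + 2^1)" by (rule coprime_shift) (use \<open>odd u\<close> in simp)
    moreover have "u + 2^2 = u + 4" "u + 2 + 2^1 = u + 4" by simp_all
    ultimately show ?thesis by (metis coprime_mult_left_iff)
  qed
  moreover have "coprime (2^j) (u * (u + 2) * (u + 4))" using \<open>odd u\<close> by simp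
  ultimately have "2^j * (u * (u + 2) * (u + 4)) dvd t"
    using dvd_t by (metis divides_mult)
  hence "2^j * (u * (u + 2) * (u + 4)) \<le> t" using \<open>0 < t\<close> by (rule dvd_imp_le)
  moreover have "k * k \<le> u * (u + 4)" and "k \<le> u + 2"
    by (simp_all add: u_def k algebra_simps)
  hence "(k * k) * k * k \<le> (u * (u + 4)) * (u + 2) * 2^j"
    using mult_mono j(1) by (metis zero_le)
  hence "k^4 \<le> 2^j * (u * (u + 2) * (u + 4))"
    by (simp only: power4_eq_xxxx ac_simps)
  ultimately show ?thesis by linarith
qed

text \<open>Each case writes the gap \<open>b (k\<^sup>2 - k - 1) - s' y'\<close> for the extremal \<open>s'\<close>, \<open>y'\<close> as a sum of
  visibly non-negative terms.\<close>

lemma shifted_term_bound: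
  fixes a b k s x :: int
  assumes "2 \<le> b" "b \<le> k" "a \<le> k" "x \<le> k" "x \<noteq> a" "0 \<le> s" "s \<le> a + b - 1"
    and "s \<le> a + b - 2 \<or> 5 \<le> k" and "4 \<le> k"
  shows "s * (x + b) \<le> b * (k^2 - k - 1)"
proof -
  have bound: "s * (x + b) \<le> b * (k^2 - k - 1)"
    if "s \<le> s'" "x + b \<le> y'" "0 \<le> y'" "b * (k^2 - k - 1) - s' * y' = E" "0 \<le> E" for s' y' E
  proof (cases "0 \<le> x + b")
    case True
    hence "s * (x + b) \<le> s' * y'" using that \<open>0 \<le> s\<close> by (intro mult_mono) simp_all
    thus ?thesis using that by simp
  next
    case False
    hence "s * (x + b) \<le> 0" using \<open>0 \<le> s\<close> by (simp add: mult_nonneg_nonpos)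
    moreover have "0 \<le> s' * y'" using that \<open>0 \<le> s\<close> by simp
    ultimately show ?thesis using that by linarith
  qed
  have nonneg: "0 \<le> (b - 2) * (k - b)" "0 \<le> k * ((b - 1) * (k - 4))"
    using assms by simp_all
  consider "a < k" "s \<le> a + b - 2" | "a < k" "5 \<le> k" | "a = k" "s \<le> a + b - 2" | "a = k" "5 \<le> k"
    using assms by linarith
  thus ?thesis
  proof cases
    case 1
    have gap: "b * (k^2 - k - 1) - (k + b - 3) * (k + b) = (b - 2) * (k - b) + k * ((b - 1) * (k - 4)) + k"
      by (simp add: power2_eq_square algebra_simps)
    show ?thesis
      by (rule bound[OF _ _ _ gap]) (use 1 assms nonneg in linarith)+
  next
    case 2
    have gap: "b * (k^2 - k - 1) - (k + b - 2) * (k + b)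
        = (b - 2) * (k - b) + (b - 1) * (k * (k - 5)) + ((b - 1) * (k - 1) - 1)"
      by (simp add: power2_eq_square algebra_simps)
    have "4 \<le> (b - 1) * (k - 1)" "0 \<le> (b - 1) * (k * (k - 5))"
      using 2 assms mult_mono[of 1 "b - 1" 4 "k - 1"] by simp_all
    thus ?thesis
      by (intro bound[OF _ _ _ gap]) (use 2 assms nonneg in linarith)+
  next
    case 3
    have gap: "b * (k^2 - k - 1) - (k + b - 2) * (k + b - 1)
        = (b - 2) * (k - b) + k * ((b - 1) * (k - 4)) + (k - 2)"
      by (simp add: power2_eq_square algebra_simps)
    show ?thesis
      by (rule bound[OF _ _ _ gap]) (use 3 assms nonneg in linarith)+
  next
    case 4
    have gap: "b * (k^2 - k - 1) - (k + b - 1) * (k + b - 1)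
        = (b - 2) * (k - b) + (b - 1) * (k * (k - 5)) + ((b - 1) * (k - 1) - 2)"
      by (simp add: power2_eq_square algebra_simps)
    have "4 \<le> (b - 1) * (k - 1)" "0 \<le> (b - 1) * (k * (k - 5))"
      using 4 assms mult_mono[of 1 "b - 1" 4 "k - 1"] by simp_all
    thus ?thesis
      by (intro bound[OF _ _ _ gap]) (use 4 assms nonneg in linarith)+
  qed
qed

lemma shifted_term_bound_k4:
  fixes a b x :: int
  assumes "2 \<le> a" "a \<le> 4" "2 \<le> b" "b \<le> 4" "-4 \<le> x" "x \<le> 4" "x \<noteq> a" "x \<noteq> -b"
    and "(a + b) dvd (x + 12 * b)"
  shows "(a + b - 1) * (x + b) \<le> 11 * b \<and> (a + b - 1) * (a - x) \<le> 11 * a"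
proof -
  have "a = 2 \<or> a = 3 \<or> a = 4" "b = 2 \<or> b = 3 \<or> b = 4"
    "x = -4 \<or> x = -3 \<or> x = -2 \<or> x = -1 \<or> x = 0 \<or> x = 1 \<or> x = 2 \<or> x = 3 \<or> x = 4"
    using assms(1-6) by presburger+
  thus ?thesis using assms(7-9) by (elim disjE) simp_all
qed

section \<open>Heavy terms\<close>

text \<open>If every value in \<open>[1, k]\<close> and the value \<open>0\<close> occurred fewer than \<open>m\<close> times, then there
  would be at most \<open>k (m - 1)\<close> positive terms, hence (by the zero sum) at most \<open>k\<^sup>2 (m - 1)\<close>
  negative ones.\<close>

lemma obtain_heavy_positive_term:
  fixes S :: "int multiset" and k :: int and m :: nat
  assumes "0 \<le> k" and bounded: "k_bounded k S" and "t_avoiding m S"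
    and long: "(k^2 + k + 1) * (int m - 1) < int (size S)"
  obtains a where "1 \<le> a" "a \<le> k" "m \<le> count S a"
proof (rule ccontr)
  assume "\<not> thesis"
  with that have light: "int (count S a) \<le> int m - 1" if "1 \<le> a" "a \<le> k" for a
    using \<open>1 \<le> a\<close> \<open>a \<le> k\<close> by force
  define Pos where "Pos = filter_mset (\<lambda>x. 0 < x) S"
  define Neg where "Neg = filter_mset (\<lambda>x. x < 0) S"
  define Zero where "Zero = filter_mset (\<lambda>x. x = 0) S"
  have S: "S = Pos + Neg + Zero"
    by (rule multiset_eqI) (auto simp: Pos_def Neg_def Zero_def)
  have Zero: "Zero = replicate_mset (count S 0) 0"
    unfolding Zero_def by (rule filter_eq_replicate_mset)
  have "\<not> replicate_mset m 0 \<subseteq># S"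
    using \<open>t_avoiding m S\<close> unfolding t_avoiding_def zero_sum_def
    by (metis size_replicate_mset sum_mset_replicate_mset mult_zero_right)
  hence "int (size Zero) \<le> int m - 1"
    by (simp add: Zero flip: count_le_replicate_mset_subset_eq)
  have "int (size Pos) = (\<Sum>a\<in>set_mset Pos. int (count Pos a))"
    by (simp add: size_multiset_overloaded_eq)
  also have "\<dots> \<le> (\<Sum>a\<in>{1..k}. int (count Pos a))"
    using bounded by (intro sum_mono2) (auto simp: Pos_def k_bounded_def)
  also have "\<dots> \<le> (\<Sum>a\<in>{1..k}. int m - 1)"
    by (intro sum_mono) (use light in \<open>auto simp: Pos_def\<close>)
  finally have size_Pos: "int (size Pos) \<le> k * (int m - 1)" using \<open>0 \<le> k\<close> by simp
  have "sum_mset Pos \<le> int (size Pos) * k"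
    using bounded sum_mset_le_size_mult[of Pos id k] by (auto simp: Pos_def k_bounded_def)
  moreover have "sum_mset Neg \<le> int (size Neg) * (-1)"
    using sum_mset_le_size_mult[of Neg id "-1"] by (auto simp: Neg_def)
  moreover have "sum_mset Pos + sum_mset Neg = 0"
    using \<open>t_avoiding m S\<close> arg_cong[OF S, of sum_mset] by (simp add: Zero t_avoiding_def zero_sum_def)
  ultimately have "int (size Neg) \<le> k * int (size Pos)" by (simp add: mult.commute)
  also have "\<dots> \<le> k * (k * (int m - 1))" using size_Pos \<open>0 \<le> k\<close> by (rule mult_left_mono)
  finally have "int (size S) \<le> (k^2 + k + 1) * (int m - 1)"
    using size_Pos \<open>int (size Zero) \<le> int m - 1\<close> arg_cong[OF S, of size]
    by (simp add: power2_eq_square algebra_simps)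
  thus False using long by simp
qed

locale heavy_pair =
  fixes S :: "int multiset" and k a b :: int and t m :: nat
  assumes k_ge_4: "4 \<le> k"
    and m_eq: "int m = k^2 - k - 1"
    and bounded: "k_bounded k S"
    and size_S: "size S = t + m"
    and avoiding: "t_avoiding m S"
    and a_range: "1 \<le> a" "a \<le> k" and a_heavy: "m \<le> count S a"
    and b_range: "1 \<le> b" "b \<le> k" and b_heavy: "m \<le> count S (-b)"
    and interval_dvd_t: "\<And>n. 2 \<le> n \<Longrightarrow> n \<le> 2 * k - 1 \<Longrightarrow> n dvd int t"
begin

definition rest :: "int multiset" where
  "rest = filter_mset (\<lambda>x. x \<noteq> a \<and> x \<noteq> -b) S"

lemma S_eq_rest: "S = rest + replicate_mset (count S a) a + replicate_mset (count S (-b)) (-b)"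
  by (rule multiset_eqI) (use a_range b_range in \<open>auto simp: rest_def\<close>)

lemma mem_rest: "x \<in># rest \<Longrightarrow> -k \<le> x \<and> x \<le> k \<and> x \<noteq> a \<and> x \<noteq> -b"
  using bounded by (auto simp: rest_def k_bounded_def)

text \<open>Adding \<open>\<alpha>\<close> copies of \<open>a\<close> and \<open>\<beta>\<close> copies of \<open>-b\<close> to \<open>T\<close>, where
  \<open>(a + b) \<alpha> = b m - \<Sum>(x + b)\<close> and \<open>(a + b) \<beta> = a m - \<Sum>(a - x)\<close>, gives a zero-sum
  subsequence of \<open>S\<close> of length \<open>m\<close>.\<close>

lemma no_completion:
  assumes T: "T \<subseteq># rest"
    and dvd: "(a + b) dvd b * int m - (\<Sum>x\<in>#T. x + b)"
    and up: "(\<Sum>x\<in>#T. x + b) \<le> b * int m"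
    and down: "(\<Sum>x\<in>#T. a - x) \<le> a * int m"
  shows False
proof -
  have ab: "0 < a + b" using a_range b_range by simp
  have sum_up: "(\<Sum>x\<in>#T. x + b) = sum_mset T + int (size T) * b"
    and sum_down: "(\<Sum>x\<in>#T. a - x) = int (size T) * a - sum_mset T"
    by (induction T) (simp_all add: algebra_simps)
  define \<alpha> where "\<alpha> = (b * int m - (\<Sum>x\<in>#T. x + b)) div (a + b)"
  define \<beta> where "\<beta> = int m - int (size T) - \<alpha>"
  have \<alpha>_eq: "(a + b) * \<alpha> = b * int m - (\<Sum>x\<in>#T. x + b)"
    using dvd by (simp add: \<alpha>_def)
  hence \<beta>_eq: "(a + b) * \<beta> = a * int m - (\<Sum>x\<in>#T. a - x)"
    by (simp add: \<beta>_def sum_up sum_down algebra_simps)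
  have "0 \<le> (a + b) * \<alpha>" "0 \<le> (a + b) * \<beta>" using \<alpha>_eq \<beta>_eq up down by simp_all
  hence "0 \<le> \<alpha>" "0 \<le> \<beta>" using ab by (simp_all add: zero_le_mult_iff)
  hence "nat \<alpha> \<le> m" "nat \<beta> \<le> m" by (simp_all add: \<beta>_def)
  define R where "R = T + replicate_mset (nat \<alpha>) a + replicate_mset (nat \<beta>) (-b)"
  have "R \<subseteq># S"
  proof -
    have "replicate_mset (nat \<alpha>) a \<subseteq># replicate_mset (count S a) a"
      "replicate_mset (nat \<beta>) (-b) \<subseteq># replicate_mset (count S (-b)) (-b)"
      using \<open>nat \<alpha> \<le> m\<close> \<open>nat \<beta> \<le> m\<close> a_heavy b_heavy
      by (simp_all flip: count_le_replicate_mset_subset_eq)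
    with T show ?thesis
      unfolding R_def by (subst S_eq_rest) (intro subset_mset.add_mono)
  qed
  moreover have "size R = m" using \<open>0 \<le> \<alpha>\<close> \<open>0 \<le> \<beta>\<close> by (simp add: R_def \<beta>_def)
  moreover have "sum_mset R = 0"
    using \<alpha>_eq \<open>0 \<le> \<alpha>\<close> \<open>0 \<le> \<beta>\<close> by (simp add: R_def \<beta>_def sum_up algebra_simps)
  ultimately show False using avoiding by (auto simp: t_avoiding_def zero_sum_def)
qed

lemma rest_congruence: "(a + b) dvd b * int m - (\<Sum>x\<in>#rest. x + b)"
proof -
  have "sum_mset rest + int (count S a) * a - int (count S (-b)) * b = 0"
    using avoiding by (subst (asm) S_eq_rest) (simp add: t_avoiding_def zero_sum_def)
  moreover have "b * (int (size rest) + int (count S a) + int (count S (-b))) = b * (int t + int m)"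
    using arg_cong[OF S_eq_rest, of size] size_S by simp
  ultimately have "b * int m - (\<Sum>x\<in>#rest. x + b) = (a + b) * int (count S a) - b * int t"
    by (simp add: sum_mset_shift algebra_simps)
  moreover have "(a + b) dvd b * int t"
    using interval_dvd_t k_ge_4 a_range b_range by (intro add_dvd_mult_if_interval_dvd) simp_all
  ultimately show ?thesis by simp
qed

lemma obtain_short_subset:
  obtains T where "T \<subseteq># rest" "(a + b) dvd b * int m - (\<Sum>x\<in>#T. x + b)"
    "int (size T) < a + b"
    "int (size T) = a + b - 1 \<longrightarrow> (\<forall>x\<in>#T. \<forall>y\<in>#T. (a + b) dvd x - y)"
proof -
  have ab: "0 < a + b" using a_range b_range by simp
  obtain V where V: "V \<subseteq># image_mset (\<lambda>x. x + b) rest" "(a + b) dvd b * int m - sum_mset V"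
    "zero_sum_free_mod (a + b) V"
    using obtain_zero_sum_free_mod_subset rest_congruence by blast
  define T where "T = image_mset (\<lambda>x. x - b) V"
  have V_eq: "V = image_mset (\<lambda>x. x + b) T" by (simp add: T_def multiset.map_comp comp_def)
  have "T \<subseteq># rest"
    using image_mset_subseteq_mono[OF V(1), of "\<lambda>x. x - b"]
    by (simp add: T_def multiset.map_comp comp_def)
  moreover have "int (size T) < a + b"
    using size_less_if_zero_sum_free_mod[OF ab V(3)] by (simp add: V_eq)
  moreover have "int (size T) = a + b - 1 \<longrightarrow> (\<forall>x\<in>#T. \<forall>y\<in>#T. (a + b) dvd x - y)"
  proof (intro impI ballI)
    fix x y assume "int (size T) = a + b - 1" "x \<in># T" "y \<in># T"
    thus "(a + b) dvd x - y"
      using congruent_if_zero_sum_free_mod_maximal[OF ab V(3), of "x + b" "y + b"] by (simp add: V_eq)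
  qed
  ultimately show ?thesis using that V(2) by (simp add: V_eq)
qed

lemma two_k_le_m: "2 * k \<le> int m"
proof -
  have "4 * k \<le> k * k" using k_ge_4 by (simp add: mult_right_mono)
  thus ?thesis using k_ge_4 m_eq by (simp add: power2_eq_square)
qed

lemma heavy_pair_uminus: "heavy_pair (image_mset uminus S) k b a t m"
  using k_ge_4 m_eq bounded size_S avoiding a_range a_heavy b_range b_heavy interval_dvd_t
  by unfold_locales
    (simp_all add: k_bounded_image_uminus t_avoiding_image_uminus count_image_mset_uminus)

lemma no_heavy_pair_if_ge_2:
  assumes "2 \<le> a" "2 \<le> b"
  shows False
proof -
  obtain T where T: "T \<subseteq># rest" "(a + b) dvd b * int m - (\<Sum>x\<in>#T. x + b)" "int (size T) < a + b"
    and maximal: "int (size T) = a + b - 1 \<longrightarrow> (\<forall>x\<in>#T. \<forall>y\<in>#T. (a + b) dvd x - y)"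
    by (rule obtain_short_subset)
  define s where "s = int (size T)"
  have mem_T: "-k \<le> x \<and> x \<le> k \<and> x \<noteq> a \<and> x \<noteq> -b" if "x \<in># T" for x
    using mem_rest[OF mset_subset_eqD[OF T(1) that]] .
  have term_bounds: "s * (x + b) \<le> b * int m \<and> s * (a - x) \<le> a * int m" if "x \<in># T" for x
  proof (cases "k = 4 \<and> s = a + b - 1")
    case True
    txt \<open>All terms of \<open>T\<close> are congruent modulo \<open>a + b\<close>, so the congruence for
      \<open>\<Sum>(y + b)\<close> pins down each single term modulo \<open>a + b\<close>.\<close>
    have "(a + b) dvd (\<Sum>y\<in>#T. y + b) - of_nat (size T) * (x + b)"
      using maximal True \<open>x \<in># T\<close> by (intro dvd_sum_mset_minus_size_mult) (simp add: s_def)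
    from dvd_add[OF T(2) this] have "(a + b) dvd b * int m - s * (x + b)" by (simp add: s_def)
    moreover have "b * int m - s * (x + b) = (x + 12 * b) - (a + b) * (x + b)"
      using True m_eq by (simp add: True[THEN conjunct2] algebra_simps)
    ultimately have "(a + b) dvd (x + 12 * b) - (a + b) * (x + b)" by simp
    hence "(a + b) dvd (x + 12 * b) - (a + b) * (x + b) + (a + b) * (x + b)" by (rule dvd_add) simp
    hence "(a + b) dvd x + 12 * b" by simp
    hence "(a + b - 1) * (x + b) \<le> 11 * b \<and> (a + b - 1) * (a - x) \<le> 11 * a"
      using shifted_term_bound_k4[of a b x] assms a_range b_range True mem_T[OF that] by simp
    thus ?thesis using True m_eq by simp
  next
    case False
    hence "s \<le> a + b - 2 \<or> 5 \<le> k" using T(3) k_ge_4 by (auto simp: s_def)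
    hence "s * (x + b) \<le> b * (k^2 - k - 1)" and "s * (-x + a) \<le> a * (k^2 - k - 1)"
      using shifted_term_bound[of b k a x s] shifted_term_bound[of a k b "-x" s]
        assms a_range b_range k_ge_4 mem_T[OF that] T(3) by (simp_all add: s_def add.commute)
    thus ?thesis using m_eq by simp
  qed
  show False
  proof (rule no_completion[OF T(1,2)])
    show "(\<Sum>x\<in>#T. x + b) \<le> b * int m"
      using term_bounds b_range by (intro sum_mset_le_if_size_mult_le) (simp_all add: s_def)
    show "(\<Sum>x\<in>#T. a - x) \<le> a * int m"
      using term_bounds a_range by (intro sum_mset_le_if_size_mult_le) (simp_all add: s_def)
  qed
qed

end

section \<open>The case b = 1\<close>

locale unit_heavy_pair = heavy_pair S k a 1 t m for S k a t m
begin

lemma no_completion_short: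
  assumes "T \<subseteq># rest" "int (size T) \<le> a"
    and "(a + 1) dvd int m - (\<Sum>x\<in>#T. x + 1)" "(\<Sum>x\<in>#T. x + 1) \<le> int m"
  shows False
proof (rule no_completion)
  have "(\<Sum>x\<in>#T. a - x) \<le> int (size T) * (a + k)"
    using mem_rest \<open>T \<subseteq># rest\<close> by (intro sum_mset_le_size_mult) (force dest: mset_subset_eqD)
  also have "\<dots> \<le> a * (a + k)"
    using assms(2) a_range k_ge_4 by (intro mult_right_mono) simp_all
  also have "\<dots> \<le> a * int m"
    using two_k_le_m a_range by (intro mult_left_mono) simp_all
  finally show "(\<Sum>x\<in>#T. a - x) \<le> a * int m" .
qed (use assms in simp_all)

lemma no_completion_with_copies:
  assumes "y \<in># rest" "y \<noteq> c" "j \<le> count rest c" "1 + int j \<le> a"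
    and "int m - (y + 1) - int j * (c + 1) = (a + 1) * q" "0 \<le> q"
  shows False
proof (rule no_completion_short)
  have "replicate_mset j c \<subseteq># rest - {#y#}"
    using assms(2,3) by (simp flip: count_le_replicate_mset_subset_eq)
  thus "add_mset y (replicate_mset j c) \<subseteq># rest"
    using \<open>y \<in># rest\<close> by (simp add: insert_subset_eq_iff)
  have "int m - (\<Sum>x\<in>#add_mset y (replicate_mset j c). x + 1) = (a + 1) * q"
    using assms(5) by simp
  moreover have "0 \<le> (a + 1) * q" using a_range \<open>0 \<le> q\<close> by simp
  ultimately show "(a + 1) dvd int m - (\<Sum>x\<in>#add_mset y (replicate_mset j c). x + 1)"
    and "(\<Sum>x\<in>#add_mset y (replicate_mset j c). x + 1) \<le> int m"
    by simp_all
qed (use assms in simp)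

lemma obtain_overfull_subset:
  obtains T where "T \<subseteq># rest" "(a + 1) dvd int m - (\<Sum>x\<in>#T. x + 1)" "int (size T) \<le> a"
    "int m < (\<Sum>x\<in>#T. x + 1)"
    "int (size T) = a \<longrightarrow> (\<forall>x\<in>#T. \<forall>y\<in>#T. (a + 1) dvd x - y)"
proof -
  obtain T where T: "T \<subseteq># rest" "(a + 1) dvd int m - (\<Sum>x\<in>#T. x + 1)" "int (size T) < a + 1"
    and maximal: "int (size T) = a \<longrightarrow> (\<forall>x\<in>#T. \<forall>y\<in>#T. (a + 1) dvd x - y)"
    by (rule obtain_short_subset) simp_all
  have "int m < (\<Sum>x\<in>#T. x + 1)"
  proof (rule ccontr)
    assume "\<not> int m < (\<Sum>x\<in>#T. x + 1)"
    thus False using no_completion_short[OF T(1) _ T(2)] T(3) by simp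
  qed
  thus ?thesis using that T maximal by simp
qed

lemma a_le_k_minus_2_impossible:
  assumes "a \<le> k - 2"
  shows False
proof -
  obtain T where T: "T \<subseteq># rest" "int (size T) \<le> a" "int m < (\<Sum>x\<in>#T. x + 1)"
    by (rule obtain_overfull_subset)
  have "(\<Sum>x\<in>#T. x + 1) \<le> int (size T) * (k + 1)"
    using mem_rest T(1) by (intro sum_mset_le_size_mult) (force dest: mset_subset_eqD)
  also have "\<dots> \<le> (k - 2) * (k + 1)"
    using T(2) assms k_ge_4 by (intro mult_right_mono) simp_all
  also have "\<dots> < int m" using m_eq by (simp add: power2_eq_square algebra_simps)
  finally show False using T(3) by simp
qed

lemma count_rest_k_if_a_eq_k_minus_1:
  assumes a: "a = k - 1"
  shows "k - 1 \<le> int (count rest k)"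
proof -
  obtain T where T: "T \<subseteq># rest" "k dvd int m - (\<Sum>x\<in>#T. x + 1)" "int (size T) \<le> k - 1"
    and sum_gt: "int m < (\<Sum>x\<in>#T. x + 1)"
    and maximal: "int (size T) = k - 1 \<longrightarrow> (\<forall>x\<in>#T. \<forall>y\<in>#T. k dvd x - y)"
    by (rule obtain_overfull_subset) (simp_all add: a)
  have mem_T: "-k \<le> x \<and> x \<le> k" if "x \<in># T" for x
    using mem_rest mset_subset_eqD[OF T(1) that] by blast
  have size_T: "int (size T) = k - 1"
  proof (rule ccontr)
    assume "int (size T) \<noteq> k - 1"
    hence "int (size T) \<le> k - 2" using T(3) by linarith
    have "(\<Sum>x\<in>#T. x + 1) \<le> int (size T) * (k + 1)"
      using mem_T by (intro sum_mset_le_size_mult) auto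
    also have "\<dots> \<le> (k - 2) * (k + 1)"
      using \<open>int (size T) \<le> k - 2\<close> k_ge_4 by (intro mult_right_mono) simp_all
    finally show False using sum_gt m_eq by (simp add: power2_eq_square algebra_simps)
  qed
  with maximal have cong: "k dvd x - y" if "x \<in># T" "y \<in># T" for x y using that by blast
  have "T \<noteq> {#}" using size_T k_ge_4 by auto
  then obtain x0 where "x0 \<in># T" by blast
  have "k dvd (\<Sum>x\<in>#T. x + 1) - int (size T) * (x0 + 1)"
    using cong[OF _ \<open>x0 \<in># T\<close>] by (intro dvd_sum_mset_minus_size_mult) simp
  from dvd_add[OF T(2) this] have "k dvd int m - int (size T) * (x0 + 1)" by simp
  moreover have "int m - int (size T) * (x0 + 1) = k * (k - 2 - x0) + x0"
    using m_eq by (simp add: size_T power2_eq_square algebra_simps)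
  ultimately have "k dvd x0" by (simp add: dvd_add_right_iff)
  have T_values: "x = -k \<or> x = 0 \<or> x = k" if "x \<in># T" for x
  proof (rule dvd_cases_if_abs_le)
    show "k dvd x" using dvd_add[OF cong[OF that \<open>x0 \<in># T\<close>] \<open>k dvd x0\<close>] by simp
  qed (use k_ge_4 mem_T[OF that] in simp_all)
  have "x = k" if "x \<in># T" for x
  proof (rule ccontr)
    assume "x \<noteq> k"
    hence "x + 1 \<le> 1" using T_values[OF \<open>x \<in># T\<close>] k_ge_4 by auto
    hence "(\<Sum>x\<in>#T. x + 1) \<le> 1 + int (size T - 1) * (k + 1)"
      by (rule sum_mset_le_size_mult_remove[OF \<open>x \<in># T\<close>]) (drule mem_T, linarith)
    also have "int (size T - 1) = k - 2" using size_T k_ge_4 by (simp add: of_nat_diff)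
    finally show False using sum_gt m_eq by (simp add: power2_eq_square algebra_simps)
  qed
  hence "size T \<le> count rest k" using T(1) by (intro size_le_count_if_constant)
  thus ?thesis using size_T by simp
qed

lemma rest_eq_k_if_a_eq_k_minus_1:
  assumes a: "a = k - 1" and y: "y \<in># rest"
  shows "y = k"
proof (rule ccontr)
  assume "y \<noteq> k"
  have count: "k - 1 \<le> int (count rest k)" using a by (rule count_rest_k_if_a_eq_k_minus_1)
  have "-k \<le> y" "y \<le> k - 2" "y \<noteq> -1" using mem_rest[OF y] \<open>y \<noteq> k\<close> a by auto
  show False
  proof (cases "0 \<le> y")
    case True
    show False
    proof (rule no_completion_with_copies[OF y \<open>y \<noteq> k\<close>, of "nat (k - 2 - y)" y])
      show "nat (k - 2 - y) \<le> count rest k" using count True by (simp add: nat_le_iff)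
      show "1 + int (nat (k - 2 - y)) \<le> a" using True \<open>y \<le> k - 2\<close> a by simp
      show "int m - (y + 1) - int (nat (k - 2 - y)) * (k + 1) = (a + 1) * y"
        using \<open>y \<le> k - 2\<close> a m_eq by (simp add: power2_eq_square algebra_simps)
    qed (use True in simp)
  next
    case False
    show False
    proof (rule no_completion_with_copies[OF y \<open>y \<noteq> k\<close>, of "nat (-2 - y)" "k + 1 + y"])
      show "nat (-2 - y) \<le> count rest k" using count \<open>-k \<le> y\<close> by (simp add: nat_le_iff)
      show "1 + int (nat (-2 - y)) \<le> a" using False \<open>y \<noteq> -1\<close> \<open>-k \<le> y\<close> a by simp
      show "int m - (y + 1) - int (nat (-2 - y)) * (k + 1) = (a + 1) * (k + 1 + y)"
        using False \<open>y \<noteq> -1\<close> a m_eq by (simp add: power2_eq_square algebra_simps)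
    qed (use \<open>-k \<le> y\<close> in simp)
  qed
qed

lemma count_rest_k_minus_1_if_a_eq_k:
  assumes a: "a = k"
  shows "k \<le> int (count rest (k - 1))"
proof -
  obtain T where T: "T \<subseteq># rest" "(k + 1) dvd int m - (\<Sum>x\<in>#T. x + 1)" "int (size T) \<le> k"
    and sum_gt: "int m < (\<Sum>x\<in>#T. x + 1)"
    and maximal: "int (size T) = k \<longrightarrow> (\<forall>x\<in>#T. \<forall>y\<in>#T. (k + 1) dvd x - y)"
    by (rule obtain_overfull_subset) (simp_all add: a)
  have mem_T: "-k \<le> x \<and> x \<le> k - 1" if "x \<in># T" for x
    using mem_rest[OF mset_subset_eqD[OF T(1) that]] a by auto
  have size_T: "int (size T) = k"
  proof (rule ccontr)
    assume "int (size T) \<noteq> k"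
    hence "int (size T) \<le> k - 1" using T(3) by linarith
    have "(\<Sum>x\<in>#T. x + 1) \<le> int (size T) * k"
      by (rule sum_mset_le_size_mult) (drule mem_T, linarith)
    also have "\<dots> \<le> (k - 1) * k"
      using \<open>int (size T) \<le> k - 1\<close> k_ge_4 by (intro mult_right_mono) simp_all
    finally have "(\<Sum>x\<in>#T. x + 1) = int m + 1" using sum_gt m_eq by (simp add: power2_eq_square algebra_simps)
    hence "(k + 1) dvd 1" using T(2) by simp
    thus False using k_ge_4 zdvd_imp_le[of "k + 1" 1] by simp
  qed
  with maximal have cong: "(k + 1) dvd x - y" if "x \<in># T" "y \<in># T" for x y using that by blast
  have "T \<noteq> {#}" using size_T k_ge_4 by auto
  then obtain x0 where "x0 \<in># T" by blast
  have "(k + 1) dvd (\<Sum>x\<in>#T. x + 1) - int (size T) * (x0 + 1)"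
    using cong[OF _ \<open>x0 \<in># T\<close>] by (intro dvd_sum_mset_minus_size_mult) simp
  from dvd_add[OF T(2) this] have "(k + 1) dvd int m - int (size T) * (x0 + 1)" by simp
  moreover have "int m - int (size T) * (x0 + 1) = (k + 1) * (k - 3 - x0) + (x0 + 2)"
    using m_eq by (simp add: size_T power2_eq_square algebra_simps)
  ultimately have "(k + 1) dvd x0 + 2" by (simp add: dvd_add_right_iff)
  have T_values: "x = -2 \<or> x = k - 1" if "x \<in># T" for x
  proof -
    have "x + 2 = -(k + 1) \<or> x + 2 = 0 \<or> x + 2 = k + 1"
    proof (rule dvd_cases_if_abs_le)
      show "(k + 1) dvd x + 2"
        using dvd_add[OF cong[OF that \<open>x0 \<in># T\<close>] \<open>(k + 1) dvd x0 + 2\<close>] by simp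
    qed (use k_ge_4 mem_T[OF that] in simp_all)
    thus ?thesis using mem_T[OF that] by auto
  qed
  have "x = k - 1" if "x \<in># T" for x
  proof (rule ccontr)
    assume "x \<noteq> k - 1"
    hence "x + 1 \<le> -1" using T_values[OF \<open>x \<in># T\<close>] by auto
    hence "(\<Sum>x\<in>#T. x + 1) \<le> -1 + int (size T - 1) * k"
      by (rule sum_mset_le_size_mult_remove[OF \<open>x \<in># T\<close>]) (drule mem_T, linarith)
    also have "int (size T - 1) = k - 1" using size_T k_ge_4 by (simp add: of_nat_diff)
    finally show False using sum_gt m_eq by (simp add: power2_eq_square algebra_simps)
  qed
  hence "size T \<le> count rest (k - 1)" using T(1) by (intro size_le_count_if_constant)
  thus ?thesis using size_T by simp
qed

lemma rest_eq_k_minus_1_if_a_eq_k: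
  assumes a: "a = k" and y: "y \<in># rest"
  shows "y = k - 1"
proof (rule ccontr)
  assume "y \<noteq> k - 1"
  have count: "k \<le> int (count rest (k - 1))" using a by (rule count_rest_k_minus_1_if_a_eq_k)
  have "-k \<le> y" "y \<le> k - 2" "y \<noteq> -1" using mem_rest[OF y] \<open>y \<noteq> k - 1\<close> a by auto
  show False
  proof (cases "0 \<le> y")
    case True
    show False
    proof (rule no_completion_with_copies[OF y \<open>y \<noteq> k - 1\<close>, of "nat y" "k - 2 - y"])
      show "nat y \<le> count rest (k - 1)" using count \<open>y \<le> k - 2\<close> by (simp add: nat_le_iff)
      show "1 + int (nat y) \<le> a" using True \<open>y \<le> k - 2\<close> a by simp
      show "int m - (y + 1) - int (nat y) * (k - 1 + 1) = (a + 1) * (k - 2 - y)"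
        using True a m_eq by (simp add: power2_eq_square algebra_simps)
    qed (use \<open>y \<le> k - 2\<close> in simp)
  next
    case False
    show False
    proof (rule no_completion_with_copies[OF y \<open>y \<noteq> k - 1\<close>, of "nat (y + k + 1)" "-2 - y"])
      show "nat (y + k + 1) \<le> count rest (k - 1)"
        using count False \<open>y \<noteq> -1\<close> by (simp add: nat_le_iff)
      show "1 + int (nat (y + k + 1)) \<le> a" using False \<open>y \<noteq> -1\<close> \<open>-k \<le> y\<close> a by simp
      show "int m - (y + 1) - int (nat (y + k + 1)) * (k - 1 + 1) = (a + 1) * (-2 - y)"
        using \<open>-k \<le> y\<close> a m_eq by (simp add: power2_eq_square algebra_simps)
    qed (use False \<open>y \<noteq> -1\<close> in simp)
  qed
qed

lemma set_mset_S: "set_mset S \<subseteq> {-1, k - 1, k}"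
proof -
  have "\<not> a \<le> k - 2" using a_le_k_minus_2_impossible by blast
  hence "a = k - 1 \<or> a = k" using a_range(2) by linarith
  moreover have "y = k - 1 \<or> y = k" if "y \<in># rest" for y
    using calculation rest_eq_k_if_a_eq_k_minus_1[OF _ that] rest_eq_k_minus_1_if_a_eq_k[OF _ that]
    by blast
  moreover have "set_mset S \<subseteq> insert a (insert (-1) (set_mset rest))"
    by (auto simp: rest_def)
  ultimately show ?thesis by blast
qed

end

lemma obtain_heavy_pair:
  fixes k t :: nat and S :: "int multiset"
  assumes "4 \<le> k" and "0 < t" and "Lcm {2..2*k-1} dvd t" and "k_bounded (int k) S"
    and "size S = t + k^2 - k - 1" and "t_avoiding t S"
  obtains a b where "heavy_pair S (int k) a b t (k^2 - k - 1)"
proof -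
  define m where "m = k^2 - k - 1"
  have "4 * k \<le> k * k" using \<open>4 \<le> k\<close> by (rule mult_right_mono) simp
  hence "k + 1 \<le> k^2" using \<open>4 \<le> k\<close> unfolding power2_eq_square by linarith
  hence size_S: "size S = t + m" and m_eq: "int m = int k ^ 2 - int k - 1"
    using assms(5) by (simp_all add: m_def of_nat_diff)
  have avoiding: "t_avoiding m S" using size_S assms(6) by (rule t_avoiding_complement)
  have interval_dvd: "n dvd int t" if "2 \<le> n" "n \<le> 2 * int k - 1" for n :: int
  proof -
    have "nat n \<in> {2..2*k-1}" using that by (simp add: le_nat_iff nat_le_iff)
    hence "nat n dvd t" using assms(3) by (meson dvd_Lcm dvd_trans)
    thus ?thesis using that by (simp add: nat_dvd_iff)
  qed
  have "(int k ^ 2 + int k + 1) * (int m - 1) = int k ^ 4 - 2 * int k ^ 2 - 3 * int k - 2"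
    unfolding m_eq by (simp add: power4_eq_xxxx power2_eq_square algebra_simps)
  also have "\<dots> < int k ^ 4" using zero_le_power2[of "int k"] by linarith
  also have "\<dots> \<le> int (size S)"
    using pow4_le_if_Lcm_dvd[OF assms(1-3)] size_S by (simp flip: of_nat_power)
  finally have long: "(int k ^ 2 + int k + 1) * (int m - 1) < int (size S)" .
  obtain a where a: "1 \<le> a" "a \<le> int k" "m \<le> count S a"
    using obtain_heavy_positive_term[OF _ assms(4) avoiding long] by auto
  obtain b where b: "1 \<le> b" "b \<le> int k" "m \<le> count S (-b)"
    using obtain_heavy_positive_term[of "int k" "image_mset uminus S" m] assms(4) avoiding long
    by (auto simp: k_bounded_image_uminus t_avoiding_image_uminus count_image_mset_uminus)
  have "heavy_pair S (int k) a b t m"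
    using assms(1,4) m_eq size_S avoiding a b interval_dvd by unfold_locales simp_all
  thus ?thesis using that by (simp add: m_def)
qed

theorem mainTheorem5:
  fixes k t :: nat and S :: "int multiset"
  assumes "k \<ge> 4"
    and "t > 0"
    and "Lcm {2..2*k-1} dvd t"
    and "k_bounded (int k) S"
    and "zero_sum S"
    and "size S = t + k^2 - k - 1"
    and "t_avoiding t S"
  shows "set_mset S \<subseteq> {-1, int k - 1, int k} \<or> set_mset S \<subseteq> {1, -(int k - 1), -(int k)}"
proof -
  obtain a b where pair: "heavy_pair S (int k) a b t (k^2 - k - 1)"
    using obtain_heavy_pair[OF assms(1-4,6,7)] by blast
  interpret heavy_pair S "int k" a b t "k^2 - k - 1" by (fact pair)
  consider "b = 1" | "a = 1" | "2 \<le> a" "2 \<le> b" using a_range b_range by linarith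
  thus ?thesis
  proof cases
    case 1
    hence "unit_heavy_pair S (int k) a t (k^2 - k - 1)"
      using pair by (simp add: unit_heavy_pair_def)
    thus ?thesis using unit_heavy_pair.set_mset_S by blast
  next
    case 2
    hence "unit_heavy_pair (image_mset uminus S) (int k) b t (k^2 - k - 1)"
      using heavy_pair_uminus by (simp add: unit_heavy_pair_def)
    hence "set_mset (image_mset uminus S) \<subseteq> {-1, int k - 1, int k}"
      by (rule unit_heavy_pair.set_mset_S)
    thus ?thesis by auto
  next
    case 3
    thus ?thesis using no_heavy_pair_if_ge_2 by blast
  qed
qed

end
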